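(* Let $p\in(0,1)$, let $\ell\ge 1$ be fixed, and let $x_e$, $e\in\binom{[n]}{2}$, be independent Bernoulli($p$) random variables, with $\chi_e=(x_e-p)/\sqrt{p(1-p)}$. Suppose \[F(\mathbf{x})=\sum_{H:\,v(H)\le\ell}\binom{n-v(H)}{\ell-v(H)}\Phi_H\,\gamma_H(\mathbf{x}),\] where the sum is over isomorphism classes of graphs $H$ without isolated vertices on at most $\ell$ vertices, the $\Phi_H$ are real constants independent of $n$, and (1) $\Phi_H=0$ for every connected graph $H$ on $3$ or $4$ vertices; (2) $\Phi_{K_2}\neq0$ and $\Phi_{K_2+K_2}\neq 0$, where $K_2+K_2$ is the disjoint union of two edges. Suppose further that $F$ is integer valued. Then there is a sequence $(y_n)$ such that $\mathbb{P}[F(\mathbf{x})=y_n]\gtrsim n^{3/2-\ell}$, the implicit constant depending on $p$ and the constants $\Phi_H$ (and $\ell$).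
   Context: For a graph $H$ with no isolated vertices, the graph factor is $\gamma_H(\mathbf{x})=\sum_{E\subseteq\binom{[n]}{2},\,E\simeq H}\prod_{e\in E}\chi_e$, the sum over edge sets $E$ whose spanned graph is isomorphic to $H$; for the empty graph $\gamma_{K_0}=1$. *)

theory Defs
  imports Complex_Main
begin

text \<open>Graphs without isolated vertices are represented by their edge sets
  (sets of 2-element subsets of nat); the vertex set is the union of the edges.\<close>

definition is_graph :: "nat set set \<Rightarrow> bool" where
  "is_graph E \<longleftrightarrow> finite E \<and> (\<forall>e\<in>E. card e = 2)"

definition vert :: "nat set set \<Rightarrow> nat set" where
  "vert E = \<Union>E"

definition graph_iso :: "nat set set \<Rightarrow> nat set set \<Rightarrow> bool" where
  "graph_iso E E' \<longleftrightarrow> (\<exists>f. bij_betw f (vert E) (vert E') \<and> (\<lambda>e. f ` e) ` E = E')"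

definition isoclass :: "nat set set \<Rightarrow> nat set set set" where
  "isoclass E = {E'. is_graph E' \<and> graph_iso E E'}"

definition graph_classes :: "nat \<Rightarrow> nat set set set set" where
  "graph_classes l = {isoclass E | E. is_graph E \<and> card (vert E) \<le> l}"

definition class_v :: "nat set set set \<Rightarrow> nat" where
  "class_v C = card (vert (SOME E. E \<in> C))"

definition connected_graph :: "nat set set \<Rightarrow> bool" where
  "connected_graph E \<longleftrightarrow>
     (\<forall>u\<in>vert E. \<forall>v\<in>vert E. (u, v) \<in> ({(a, b). {a, b} \<in> E})\<^sup>*)"

definition Kedges :: "nat \<Rightarrow> nat set set" where
  "Kedges n = {{i, j} | i j. i < n \<and> j < n \<and> i \<noteq> j}"

text \<open>A sample of the random graph is the set G \<subseteq> Kedges n of edges e with x_e = 1.\<close>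
definition chi :: "real \<Rightarrow> nat set set \<Rightarrow> nat set \<Rightarrow> real" where
  "chi p G e = ((if e \<in> G then 1 else 0) - p) / sqrt (p * (1 - p))"

definition gamma :: "real \<Rightarrow> nat \<Rightarrow> nat set set set \<Rightarrow> nat set set \<Rightarrow> real" where
  "gamma p n C G = (\<Sum>E\<in>{E. E \<subseteq> Kedges n \<and> E \<in> C}. \<Prod>e\<in>E. chi p G e)"

definition prob_G :: "real \<Rightarrow> nat \<Rightarrow> (nat set set \<Rightarrow> bool) \<Rightarrow> real" where
  "prob_G p n S = (\<Sum>G\<in>{G. G \<subseteq> Kedges n \<and> S G}.
      p ^ card G * (1 - p) ^ (card (Kedges n) - card G))"

definition Fpoly :: "nat \<Rightarrow> (nat set set set \<Rightarrow> real) \<Rightarrow> real \<Rightarrow> nat \<Rightarrow> nat set set \<Rightarrow> real" where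
  "Fpoly l Phi p n G = (\<Sum>C\<in>graph_classes l.
      real ((n - class_v C) choose (l - class_v C)) * Phi C * gamma p n C G)"

end

(* Split F as F = g(|G|) + D. By condition (1) the only graphs on at most four vertices with a
   nonzero coefficient are the empty graph, K2 and K2+K2. The K2 term is a multiple of the
   normalised edge count L = sum_e chi_e, and since chi_e^2 = 1 + beta chi_e the sum of chi_E over
   all two-edge sets E equals (L^2 - N - beta L)/2; so up to the two-edge paths, whose
   coefficient is O(n^(l-4)) on O(n^3) sets, these terms depend on |G| only. The remainder D is
   an orthogonal expansion over the paths and the graphs on at least five vertices, hence
   E[D^2] = O(n^(2l-5)). By Chebyshev, |G| lies with probability 3/4 in a window of O(n)
   values, and by Markov |D| = O(n^(l-5/2)) with probability 7/8. On both events the integer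
   F takes O(n^(l-3/2)) values, so one of them has probability Omega(n^(3/2-l)). *)

theory Submission
  imports Defs
begin

section \<open>Graphs and their isomorphism classes\<close>

lemma graph_iso_refl: "graph_iso E E"
  unfolding graph_iso_def by (rule exI[of _ id]) auto

lemma graph_iso_sym:
  assumes "graph_iso E E'"
  shows "graph_iso E' E"
proof -
  obtain f where f: "bij_betw f (vert E) (vert E')" "(\<lambda>e. f ` e) ` E = E'"
    using assms unfolding graph_iso_def by blast
  let ?g = "inv_into (vert E) f"
  have "?g ` f ` e = e" if "e \<in> E" for e
    using that f(1) by (intro inv_into_image_cancel) (auto simp: bij_betw_def vert_def)
  then have "(\<lambda>e. ?g ` e) ` E' = E"
    unfolding f(2)[symmetric] image_image by simp
  then show ?thesis
    using bij_betw_inv_into[OF f(1)] unfolding graph_iso_def by blast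
qed

lemma graph_iso_trans:
  assumes "graph_iso E E'" "graph_iso E' E''"
  shows "graph_iso E E''"
proof -
  obtain f where f: "bij_betw f (vert E) (vert E')" "(\<lambda>e. f ` e) ` E = E'"
    using assms(1) unfolding graph_iso_def by blast
  obtain g where g: "bij_betw g (vert E') (vert E'')" "(\<lambda>e. g ` e) ` E' = E''"
    using assms(2) unfolding graph_iso_def by blast
  have "(\<lambda>e. (g \<circ> f) ` e) ` E = E''"
    using f(2) g(2) by (auto simp: image_comp)
  then show ?thesis
    using bij_betw_trans[OF f(1) g(1)] unfolding graph_iso_def by blast
qed

lemma graph_iso_card_vert: "graph_iso E E' \<Longrightarrow> card (vert E) = card (vert E')"
  unfolding graph_iso_def using bij_betw_same_card by blast

lemma isoclass_eq_if_graph_iso: "graph_iso E E' \<Longrightarrow> isoclass E' = isoclass E"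
  unfolding isoclass_def using graph_iso_trans graph_iso_sym by blast

lemma mem_isoclass_self: "is_graph E \<Longrightarrow> E \<in> isoclass E"
  unfolding isoclass_def using graph_iso_refl by blast

lemma mem_isoclass_iff:
  assumes "is_graph E"
  shows "E \<in> isoclass E' \<longleftrightarrow> isoclass E = isoclass E'"
proof
  assume "E \<in> isoclass E'"
  then have "graph_iso E' E"
    unfolding isoclass_def by blast
  then show "isoclass E = isoclass E'"
    by (rule isoclass_eq_if_graph_iso)
next
  assume "isoclass E = isoclass E'"
  then show "E \<in> isoclass E'"
    using mem_isoclass_self[OF assms] by simp
qed

lemma class_v_isoclass:
  assumes "is_graph E"
  shows "class_v (isoclass E) = card (vert E)"
proof -
  have "(SOME E'. E' \<in> isoclass E) \<in> isoclass E"
    using mem_isoclass_self[OF assms] by (rule someI)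
  then show ?thesis
    unfolding class_v_def isoclass_def using graph_iso_card_vert by auto
qed

lemma card_vert_le_if_isoclass_mem:
  assumes "isoclass E \<in> graph_classes l" "is_graph E"
  shows "card (vert E) \<le> l"
proof -
  obtain E' where "isoclass E = isoclass E'" "is_graph E'" "card (vert E') \<le> l"
    using assms(1) unfolding graph_classes_def by blast
  then have "graph_iso E' E"
    using mem_isoclass_iff[OF assms(2)] unfolding isoclass_def by blast
  then show ?thesis
    using graph_iso_card_vert \<open>card (vert E') \<le> l\<close> by simp
qed

lemma edge_subset_vert: "e \<in> E \<Longrightarrow> e \<subseteq> vert E"
  unfolding vert_def by auto

lemma finite_vert: "is_graph E \<Longrightarrow> finite (vert E)"
  unfolding is_graph_def vert_def using card_ge_0_finite by (metis finite_Union zero_less_numeral)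

lemma finite_graph_classes: "finite (graph_classes l)"
proof -
  have "graph_classes l \<subseteq> isoclass ` Pow (Pow {0..<l})"
  proof
    fix C assume "C \<in> graph_classes l"
    then obtain E where E: "C = isoclass E" "is_graph E" "card (vert E) \<le> l"
      unfolding graph_classes_def by blast
    obtain f where f: "bij_betw f (vert E) {0..<card (vert E)}"
      using ex_bij_betw_finite_nat finite_vert[OF E(2)] by blast
    define E' where "E' = (\<lambda>e. f ` e) ` E"
    have "vert E' = f ` vert E"
      unfolding E'_def vert_def by auto
    then have "graph_iso E E'"
      using f unfolding graph_iso_def E'_def bij_betw_def by auto
    moreover have "vert E' \<subseteq> {0..<l}"
      using \<open>vert E' = f ` vert E\<close> f E(3) unfolding bij_betw_def by auto
    ultimately show "C \<in> isoclass ` Pow (Pow {0..<l})"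
      using E(1) isoclass_eq_if_graph_iso edge_subset_vert by blast
  qed
  then show ?thesis
    by (rule finite_subset) auto
qed

lemma finite_Kedges: "finite (Kedges n)"
  by (rule finite_subset[of _ "Pow {0..<n}"]) (auto simp: Kedges_def)

lemma vert_subset_if_subset_Kedges: "E \<subseteq> Kedges n \<Longrightarrow> vert E \<subseteq> {0..<n}"
  unfolding vert_def Kedges_def by auto

lemma card_eq_2_if_mem_Kedges: "e \<in> Kedges n \<Longrightarrow> card e = 2"
  unfolding Kedges_def by auto

lemma is_graph_if_subset_Kedges: "E \<subseteq> Kedges n \<Longrightarrow> is_graph E"
  unfolding is_graph_def using finite_Kedges card_eq_2_if_mem_Kedges finite_subset by blast

lemma card_Kedges_le: "card (Kedges n) \<le> n\<^sup>2"
proof -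
  have "Kedges n \<subseteq> (\<lambda>(i, j). {i, j}) ` ({0..<n} \<times> {0..<n})"
    unfolding Kedges_def by auto
  then have "card (Kedges n) \<le> card ({0..<n} \<times> {0..<n})"
    by (meson card_image_le card_mono finite_SigmaI finite_atLeastLessThan finite_imageI le_trans)
  then show ?thesis
    by (simp add: power2_eq_square)
qed

lemma Kedges_nonempty:
  assumes "2 \<le> n"
  shows "Kedges n \<noteq> {}"
proof -
  have "{0, 1} \<in> Kedges n"
    using assms unfolding Kedges_def by force
  then show ?thesis
    by blast
qed

lemma card_vert_ge_2:
  assumes "is_graph E" "E \<noteq> {}"
  shows "2 \<le> card (vert E)"
proof -
  obtain e where "e \<in> E"
    using assms(2) by blast
  then have "card e \<le> card (vert E)" "card e = 2"
    using card_mono[OF finite_vert[OF assms(1)] edge_subset_vert] assms(1)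
    unfolding is_graph_def by auto
  then show ?thesis
    by simp
qed

lemma card_vert_eq_2_iff:
  assumes "is_graph E"
  shows "card (vert E) = 2 \<longleftrightarrow> card E = 1"
proof
  assume v: "card (vert E) = 2"
  have "e = vert E" if "e \<in> E" for e
    using card_subset_eq[OF finite_vert[OF assms] edge_subset_vert[OF that]] that v assms
    unfolding is_graph_def by auto
  moreover have "E \<noteq> {}"
    using v by (auto simp: vert_def)
  ultimately have "E = {vert E}"
    by blast
  then show "card E = 1"
    by (metis is_singletonI is_singleton_altdef)
next
  assume "card E = 1"
  then obtain e where "E = {e}"
    by (rule card_1_singletonE)
  then show "card (vert E) = 2"
    using assms unfolding is_graph_def vert_def by simp
qed

lemma card_vert_if_card_eq_2:
  assumes "is_graph E" "card E = 2"
  shows "card (vert E) = 3 \<or> card (vert E) = 4"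
proof -
  obtain e1 e2 where E: "E = {e1, e2}" "e1 \<noteq> e2"
    using assms(2) card_2_iff by metis
  have "card e1 = 2" "card e2 = 2"
    using assms(1) E unfolding is_graph_def by auto
  moreover have "vert E = e1 \<union> e2"
    unfolding vert_def E by simp
  moreover have "card (e1 \<union> e2) \<noteq> 2"
    using E(2) card_subset_eq \<open>card e1 = 2\<close> \<open>card e2 = 2\<close>
    by (metis Un_upper1 Un_upper2 card.infinite zero_neq_numeral)
  moreover have "card e1 \<le> card (e1 \<union> e2)"
    using \<open>card e1 = 2\<close> \<open>card e2 = 2\<close> by (intro card_mono) (auto intro: card_ge_0_finite)
  moreover have "card (e1 \<union> e2) \<le> card e1 + card e2"
    by (rule card_Un_le)
  ultimately show ?thesis
    by (simp only:) linarith
qed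

lemma edge_closed_set_if_not_connected:
  assumes "is_graph E" "\<not> connected_graph E"
  obtains u a v b A where "{u, a} \<in> E" "{v, b} \<in> E" "u \<noteq> a" "v \<noteq> b"
    "u \<in> A" "a \<in> A" "v \<notin> A" "b \<notin> A" "\<And>x y. {x, y} \<in> E \<Longrightarrow> x \<in> A \<longleftrightarrow> y \<in> A"
proof -
  define R where "R = {(x, y). {x, y} \<in> E}"
  obtain u v where uv: "u \<in> vert E" "v \<in> vert E" "(u, v) \<notin> R\<^sup>*"
    using assms(2) unfolding connected_graph_def R_def by blast
  define A where "A = {x. (u, x) \<in> R\<^sup>*}"
  have closed: "x \<in> A \<longleftrightarrow> y \<in> A" if "{x, y} \<in> E" for x y
  proof -
    have "(x, y) \<in> R" "(y, x) \<in> R"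
      using that unfolding R_def by (auto simp: insert_commute)
    then show ?thesis
      unfolding A_def by (auto intro: rtrancl_into_rtrancl)
  qed
  have neighbour: "\<exists>y. y \<noteq> x \<and> {x, y} \<in> E" if x: "x \<in> vert E" for x
  proof -
    obtain e where e: "e \<in> E" "x \<in> e"
      using x unfolding vert_def by blast
    then obtain y z where "e = {y, z}" "y \<noteq> z"
      using assms(1) unfolding is_graph_def by (meson card_2_iff)
    then show ?thesis
      using e by (auto simp: insert_commute)
  qed
  obtain a where a: "a \<noteq> u" "{u, a} \<in> E"
    using neighbour uv(1) by blast
  obtain b where b: "b \<noteq> v" "{v, b} \<in> E"
    using neighbour uv(2) by blast
  have "u \<in> A" "v \<notin> A"
    using uv(3) unfolding A_def by auto
  then have "a \<in> A" "b \<notin> A"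
    using closed a(2) b(2) by blast+
  show ?thesis
    by (rule that[of u a v b A]) (use a b \<open>u \<in> A\<close> \<open>v \<notin> A\<close> \<open>a \<in> A\<close> \<open>b \<notin> A\<close> closed in auto)
qed

lemma connected_if_card_vert_le_4:
  assumes E: "is_graph E" and "card (vert E) \<le> 4" "card (vert E) = 4 \<Longrightarrow> card E \<noteq> 2"
  shows "connected_graph E"
proof (rule ccontr)
  assume "\<not> connected_graph E"
  then obtain u a v b A where edges: "{u, a} \<in> E" "{v, b} \<in> E" "u \<noteq> a" "v \<noteq> b"
    and sides: "u \<in> A" "a \<in> A" "v \<notin> A" "b \<notin> A"
    and closed: "\<And>x y. {x, y} \<in> E \<Longrightarrow> x \<in> A \<longleftrightarrow> y \<in> A"
    using edge_closed_set_if_not_connected[OF E] by blast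
  have sub: "{u, a, v, b} \<subseteq> vert E"
    using edges(1,2) edge_subset_vert by blast
  have "u \<noteq> v" "u \<noteq> b" "a \<noteq> v" "a \<noteq> b"
    using sides by blast+
  then have "card {u, a, v, b} = 4"
    using edges(3,4) distinct_card[of "[u, a, v, b]"] by simp
  then have V: "vert E = {u, a, v, b}"
    using card_subset_eq[OF finite_vert[OF E] sub] card_mono[OF finite_vert[OF E] sub] assms(2)
    by simp
  have "e = {u, a} \<or> e = {v, b}" if e: "e \<in> E" for e
  proof -
    obtain x y where xy: "e = {x, y}" "x \<noteq> y"
      using e E unfolding is_graph_def by (meson card_2_iff)
    then have "x \<in> vert E" "y \<in> vert E" "x \<in> A \<longleftrightarrow> y \<in> A"
      using e closed[of x y] edge_subset_vert by auto
    then show ?thesis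
      using xy sides unfolding V by (auto simp: insert_commute)
  qed
  then have "E = {{u, a}, {v, b}}"
    using edges by blast
  moreover have "{u, a} \<noteq> {v, b}"
    using sides by (auto simp: doubleton_eq_iff)
  ultimately show False
    using assms(3) \<open>card {u, a, v, b} = 4\<close> V by simp
qed

lemma graph_iso_single_edge:
  assumes "i \<noteq> j"
  shows "graph_iso {{0, 1}} {{i, j}}"
proof -
  define f where "f x = (if x = 0 then i else j)" for x :: nat
  have "bij_betw f {0, 1} {i, j}"
    using assms unfolding bij_betw_def inj_on_def f_def by auto
  moreover have "(\<lambda>e. f ` e) ` {{0, 1}} = {{i, j}}"
    by (auto simp: f_def)
  moreover have "vert {{0::nat, 1}} = {0, 1}" "vert {{i, j}} = {i, j}"
    unfolding vert_def by auto
  ultimately show ?thesis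
    unfolding graph_iso_def by metis
qed

lemma graph_iso_two_disjoint_edges:
  assumes "distinct [a, b, c, d]"
  shows "graph_iso {{0, 1}, {2, 3}} {{a, b}, {c, d}}"
proof -
  define f where "f x = (if x = 0 then a else if x = 1 then b else if x = 2 then c else d)"
    for x :: nat
  have "bij_betw f {0, 1, 2, 3} {a, b, c, d}"
    using assms unfolding bij_betw_def inj_on_def f_def by auto
  moreover have "(\<lambda>e. f ` e) ` {{0, 1}, {2, 3}} = {{a, b}, {c, d}}"
    by (auto simp: f_def)
  moreover have "vert {{0::nat, 1}, {2, 3}} = {0, 1, 2, 3}" "vert {{a, b}, {c, d}} = {a, b, c, d}"
    unfolding vert_def by auto
  ultimately show ?thesis
    unfolding graph_iso_def by metis
qed

lemma graph_iso_single_edge_if_card_1: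
  assumes "is_graph E" "card E = 1"
  shows "graph_iso {{0, 1}} E"
proof -
  obtain e where "E = {e}"
    using assms(2) by (rule card_1_singletonE)
  moreover obtain i j where "e = {i, j}" "i \<noteq> j"
    using assms(1) \<open>E = {e}\<close> unfolding is_graph_def by (meson card_2_iff insertI1)
  ultimately show ?thesis
    using graph_iso_single_edge by simp
qed

lemma graph_iso_two_disjoint_edges_if_card_vert_4:
  assumes "is_graph E" "card E = 2" "card (vert E) = 4"
  shows "graph_iso {{0, 1}, {2, 3}} E"
proof -
  obtain e1 e2 where E: "E = {e1, e2}"
    using assms(2) card_2_iff by metis
  then obtain a b c d where ab: "e1 = {a, b}" "a \<noteq> b" and cd: "e2 = {c, d}" "c \<noteq> d"
    using assms(1) unfolding is_graph_def by (metis card_2_iff insertCI)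
  have "card {a, b, c, d} = 4"
    using assms(3) unfolding vert_def E ab cd by (simp add: insert_commute)
  then have "a \<noteq> c \<and> a \<noteq> d \<and> b \<noteq> c \<and> b \<noteq> d"
    using ab(2) cd(2) by (auto simp: card_insert_if split: if_splits)
  then show ?thesis
    using graph_iso_two_disjoint_edges[of a b c d] ab cd E by simp
qed

section \<open>Characters of the Bernoulli product measure\<close>

definition chi_set :: "real \<Rightarrow> nat set set \<Rightarrow> nat set set \<Rightarrow> real" where
  "chi_set p G E = (\<Prod>e\<in>E. chi p G e)"

lemma chi_square:
  assumes "0 < p" "p < 1"
  shows "(chi p G e)\<^sup>2 = 1 + (1 - 2 * p) / sqrt (p * (1 - p)) * chi p G e"
proof -
  define s where "s = sqrt (p * (1 - p))"
  have "s\<^sup>2 = p * (1 - p)" "s \<noteq> 0"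
    using assms unfolding s_def by auto
  then show ?thesis
    unfolding chi_def s_def[symmetric]
    by (auto simp: field_simps power2_eq_square)
qed

text \<open>\<open>chi p {e} e\<close> and \<open>chi p {} e\<close> are the values of \<open>\<chi>\<^sub>e\<close> at \<open>x\<^sub>e = 1\<close> and \<open>x\<^sub>e = 0\<close>.\<close>

lemma chi_moments:
  assumes "0 < p" "p < 1"
  shows "p * chi p {e} e + (1 - p) * chi p {} e = 0"
    and "p * (chi p {e} e)\<^sup>2 + (1 - p) * (chi p {} e)\<^sup>2 = 1"
proof -
  define s where "s = sqrt (p * (1 - p))"
  have "s\<^sup>2 = p * (1 - p)" "s \<noteq> 0"
    using assms unfolding s_def by auto
  then show "p * chi p {e} e + (1 - p) * chi p {} e = 0"
    and "p * (chi p {e} e)\<^sup>2 + (1 - p) * (chi p {} e)\<^sup>2 = 1"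
    unfolding chi_def s_def[symmetric] by (auto simp: field_simps power2_eq_square)
qed

lemma sum_chi_eq:
  assumes "finite K" "G \<subseteq> K"
  shows "(\<Sum>e\<in>K. chi p G e) = (real (card G) - p * real (card K)) / sqrt (p * (1 - p))"
proof -
  have "(\<Sum>e\<in>K. if e \<in> G then 1 else 0 :: real) = real (card G)"
    using assms by (simp add: sum.If_cases Int_absorb1)
  then show ?thesis
    unfolding chi_def by (simp add: sum_divide_distrib[symmetric] sum_subtractf)
qed

lemma sum_prod_singletons:
  assumes "finite K"
  shows "(\<Sum>E\<in>{E \<in> Pow K. card E = 1}. prod f E) = sum f K"
proof -
  have "{E \<in> Pow K. card E = 1} = (\<lambda>e. {e}) ` K"
    by (auto simp: card_1_singleton_iff)
  then show ?thesis
    by (simp add: sum.reindex)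
qed

definition bern_weight :: "real \<Rightarrow> nat set set \<Rightarrow> nat set set \<Rightarrow> real" where
  "bern_weight p K G = p ^ card G * (1 - p) ^ (card K - card G)"

definition expect :: "real \<Rightarrow> nat set set \<Rightarrow> (nat set set \<Rightarrow> real) \<Rightarrow> real" where
  "expect p K f = (\<Sum>G\<in>Pow K. bern_weight p K G * f G)"

lemma bern_weight_nonneg: "0 \<le> p \<Longrightarrow> p \<le> 1 \<Longrightarrow> 0 \<le> bern_weight p K G"
  unfolding bern_weight_def by simp

lemma prob_G_eq_sum_bern_weight:
  "prob_G p n S = sum (bern_weight p (Kedges n)) {G \<in> Pow (Kedges n). S G}"
  unfolding prob_G_def bern_weight_def by simp

lemma bern_weight_eq_prod:
  assumes "finite K" "G \<subseteq> K"
  shows "bern_weight p K G = (\<Prod>e\<in>K. if e \<in> G then p else 1 - p)"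
proof -
  have "(\<Prod>e\<in>K. if e \<in> G then p else 1 - p) = p ^ card (K \<inter> G) * (1 - p) ^ card (K - G)"
    using assms(1) by (simp add: prod.If_cases Diff_eq)
  then show ?thesis
    unfolding bern_weight_def using assms by (simp add: Int_absorb1 card_Diff_subset finite_subset)
qed

lemma expect_prod:
  assumes "finite K"
  shows "expect p K (\<lambda>G. \<Prod>e\<in>K. f e (e \<in> G)) = (\<Prod>e\<in>K. p * f e True + (1 - p) * f e False)"
proof -
  define g where "g e b = (if b then p else 1 - p) * f e b" for e b
  have "bern_weight p K G * (\<Prod>e\<in>K. f e (e \<in> G)) = (\<Prod>e\<in>G. g e True) * (\<Prod>e\<in>K - G. g e False)"
    if "G \<subseteq> K" for G
  proof -
    have "bern_weight p K G * (\<Prod>e\<in>K. f e (e \<in> G)) = (\<Prod>e\<in>K. g e (e \<in> G))"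
      unfolding bern_weight_eq_prod[OF assms that] g_def by (simp add: prod.distrib)
    also have "\<dots> = (\<Prod>e\<in>K. if e \<in> G then g e True else g e False)"
      by (intro prod.cong) auto
    also have "\<dots> = (\<Prod>e\<in>K \<inter> {e. e \<in> G}. g e True) * (\<Prod>e\<in>K \<inter> - {e. e \<in> G}. g e False)"
      by (rule prod.If_cases[OF assms])
    finally show ?thesis
      using that by (simp add: Int_absorb1 Diff_eq)
  qed
  then have "expect p K (\<lambda>G. \<Prod>e\<in>K. f e (e \<in> G))
      = (\<Sum>G\<in>Pow K. (\<Prod>e\<in>G. g e True) * (\<Prod>e\<in>K - G. g e False))"
    unfolding expect_def by (intro sum.cong) auto
  also have "\<dots> = (\<Prod>e\<in>K. g e True + g e False)"
    by (rule prod_add[OF assms, symmetric])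
  finally show ?thesis
    unfolding g_def by simp
qed

lemma expect_sum: "expect p K (\<lambda>G. \<Sum>i\<in>I. f i G) = (\<Sum>i\<in>I. expect p K (f i))"
  unfolding expect_def by (simp add: sum_distrib_left sum.swap[of _ I])

lemma expect_cmult: "expect p K (\<lambda>G. c * f G) = c * expect p K f"
  unfolding expect_def by (simp add: sum_distrib_left algebra_simps)

lemma expect_one: "finite K \<Longrightarrow> expect p K (\<lambda>G. 1) = 1"
  using expect_prod[of K p "\<lambda>e b. 1"] by simp

lemma expect_chi_set_mult:
  assumes p: "0 < p" "p < 1" and "finite K" "E \<subseteq> K" "E' \<subseteq> K"
  shows "expect p K (\<lambda>G. chi_set p G E * chi_set p G E') = (if E = E' then 1 else 0)"
proof -
  define c where "c e b = chi p (if b then {e} else {}) e" for e b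
  have chi_c: "chi p G e = c e (e \<in> G)" for G e
    unfolding c_def chi_def by simp
  define f where "f e b = (if e \<in> E then c e b else 1) * (if e \<in> E' then c e b else 1)" for e b
  have "chi_set p G E * chi_set p G E' = (\<Prod>e\<in>K. f e (e \<in> G))" for G
    unfolding chi_set_def f_def prod.distrib chi_c
    using assms(3-5) by (simp add: prod.If_cases Int_absorb1)
  then have "expect p K (\<lambda>G. chi_set p G E * chi_set p G E')
      = (\<Prod>e\<in>K. p * f e True + (1 - p) * f e False)"
    using expect_prod[OF assms(3)] by simp
  also have "\<dots> = (\<Prod>e\<in>K. if (e \<in> E) = (e \<in> E') then 1 else 0)"
    using chi_moments[OF p] unfolding f_def c_def by (intro prod.cong) (auto simp: power2_eq_square)
  also have "\<dots> = (if E = E' then 1 else 0)"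
    using assms(3-5) by (auto simp: prod_zero_iff)
  finally show ?thesis .
qed

lemma expect_square_sum_chi_set:
  assumes p: "0 < p" "p < 1" and "finite K" "W \<subseteq> Pow K"
  shows "expect p K (\<lambda>G. (\<Sum>E\<in>W. d E * chi_set p G E)\<^sup>2) = (\<Sum>E\<in>W. (d E)\<^sup>2)"
proof -
  have fin: "finite W"
    using assms(3,4) finite_subset by blast
  have "expect p K (\<lambda>G. (\<Sum>E\<in>W. d E * chi_set p G E)\<^sup>2)
      = (\<Sum>E\<in>W. \<Sum>E'\<in>W. d E * d E' * expect p K (\<lambda>G. chi_set p G E * chi_set p G E'))"
    unfolding power2_eq_square sum_product expect_sum[symmetric] expect_cmult[symmetric]
    by (simp add: algebra_simps)
  also have "\<dots> = (\<Sum>E\<in>W. \<Sum>E'\<in>W. d E * d E' * (if E = E' then 1 else 0))"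
  proof (intro sum.cong refl)
    fix E E' assume "E \<in> W" "E' \<in> W"
    then have "E \<subseteq> K" "E' \<subseteq> K"
      using assms(4) by auto
    then show "d E * d E' * expect p K (\<lambda>G. chi_set p G E * chi_set p G E')
        = d E * d E' * (if E = E' then 1 else 0)"
      by (simp add: expect_chi_set_mult[OF p assms(3)])
  qed
  also have "\<dots> = (\<Sum>E\<in>W. (d E)\<^sup>2)"
    using fin by (simp add: power2_eq_square if_distrib sum.delta cong: if_cong)
  finally show ?thesis .
qed

lemma expect_square_sum_chi:
  assumes p: "0 < p" "p < 1" and K: "finite K"
  shows "expect p K (\<lambda>G. (\<Sum>e\<in>K. chi p G e)\<^sup>2) = real (card K)"
proof -
  have "(\<Sum>e\<in>K. chi p G e) = (\<Sum>E\<in>{E \<in> Pow K. card E = 1}. 1 * chi_set p G E)" for G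
    unfolding chi_set_def mult_1 sum_prod_singletons[OF K] ..
  then have "expect p K (\<lambda>G. (\<Sum>e\<in>K. chi p G e)\<^sup>2) = (\<Sum>E\<in>{E \<in> Pow K. card E = 1}. 1\<^sup>2)"
    using expect_square_sum_chi_set[OF p K, of "{E \<in> Pow K. card E = 1}" "\<lambda>_. 1"] by auto
  also have "\<dots> = real (card K)"
    using sum_prod_singletons[OF K, of "\<lambda>_. 1 :: real"] by simp
  finally show ?thesis .
qed

section \<open>Decomposition of F\<close>

definition Fcoeff :: "nat \<Rightarrow> (nat set set set \<Rightarrow> real) \<Rightarrow> nat \<Rightarrow> nat set set \<Rightarrow> real" where
  "Fcoeff l Phi n E = (if card (vert E) \<le> l
     then real ((n - card (vert E)) choose (l - card (vert E))) * Phi (isoclass E) else 0)"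

lemma Fcoeff_graph_iso:
  assumes "graph_iso E E'"
  shows "Fcoeff l Phi n E' = Fcoeff l Phi n E"
  using isoclass_eq_if_graph_iso[OF assms] graph_iso_card_vert[OF assms] by (simp add: Fcoeff_def)

lemma Fpoly_eq_sum_Fcoeff:
  "Fpoly l Phi p n G = (\<Sum>E\<in>Pow (Kedges n). Fcoeff l Phi n E * chi_set p G E)"
proof -
  define S where "S = {E \<in> Pow (Kedges n). card (vert E) \<le> l}"
  have graph: "is_graph E" if "E \<in> S" for E
    using that is_graph_if_subset_Kedges unfolding S_def by blast
  have fiber: "{E \<in> S. isoclass E = C} = {E. E \<subseteq> Kedges n \<and> E \<in> C}"
    if C: "C \<in> graph_classes l" for C
  proof -
    obtain E0 where "C = isoclass E0"
      using C unfolding graph_classes_def by blast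
    then show ?thesis
      unfolding S_def using C mem_isoclass_iff is_graph_if_subset_Kedges
        card_vert_le_if_isoclass_mem by auto
  qed
  have "Fpoly l Phi p n G = (\<Sum>C\<in>graph_classes l. \<Sum>E\<in>{E \<in> S. isoclass E = C}.
      Fcoeff l Phi n E * chi_set p G E)"
    unfolding Fpoly_def gamma_def
  proof (intro sum.cong refl)
    fix C assume C: "C \<in> graph_classes l"
    have "Fcoeff l Phi n E = real ((n - class_v C) choose (l - class_v C)) * Phi C"
      if "E \<in> {E \<in> S. isoclass E = C}" for E
      using that graph class_v_isoclass unfolding Fcoeff_def S_def by auto
    then show "real ((n - class_v C) choose (l - class_v C)) * Phi C *
        (\<Sum>E\<in>{E. E \<subseteq> Kedges n \<and> E \<in> C}. prod (chi p G) E) =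
        (\<Sum>E\<in>{E \<in> S. isoclass E = C}. Fcoeff l Phi n E * chi_set p G E)"
      unfolding fiber[OF C, symmetric] sum_distrib_left chi_set_def by simp
  qed
  also have "\<dots> = (\<Sum>E\<in>S. Fcoeff l Phi n E * chi_set p G E)"
    by (rule sum.group) (use finite_Kedges finite_graph_classes graph in
        \<open>auto simp: S_def graph_classes_def\<close>)
  also have "\<dots> = (\<Sum>E\<in>Pow (Kedges n). Fcoeff l Phi n E * chi_set p G E)"
    by (rule sum.mono_neutral_left) (auto simp: S_def Fcoeff_def finite_Kedges)
  finally show ?thesis .
qed

text \<open>The two-edge paths receive the coefficient of \<open>K\<^sub>2 + K\<^sub>2\<close> in \<open>Fmain\<close> although their own
  coefficient vanishes by condition (1); \<open>Frem_coeff\<close> subtracts it again.\<close>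

definition Frem_coeff :: "nat \<Rightarrow> (nat set set set \<Rightarrow> real) \<Rightarrow> nat \<Rightarrow> nat set set \<Rightarrow> real" where
  "Frem_coeff l Phi n E =
     (if card E = 2 \<and> card (vert E) = 3 then - Fcoeff l Phi n {{0, 1}, {2, 3}}
      else if 5 \<le> card (vert E) then Fcoeff l Phi n E else 0)"

lemma Fcoeff_eq_0_if_connected:
  assumes Phi_connected: "\<And>E. is_graph E \<Longrightarrow> card (vert E) \<in> {3, 4} \<Longrightarrow> connected_graph E
           \<Longrightarrow> Phi (isoclass E) = 0"
    and E: "is_graph E" and "3 \<le> card (vert E)" "card (vert E) \<le> 4"
    and "card (vert E) = 4 \<Longrightarrow> card E \<noteq> 2"
  shows "Fcoeff l Phi n E = 0"
proof -
  have "card (vert E) \<in> {3, 4}"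
    using assms(3,4) by auto
  then show ?thesis
    using Phi_connected[OF E _ connected_if_card_vert_le_4[OF E assms(4,5)]] by (simp add: Fcoeff_def)
qed

lemma Fcoeff_split:
  assumes "4 \<le> l"
    and Phi_connected: "\<And>E. is_graph E \<Longrightarrow> card (vert E) \<in> {3, 4} \<Longrightarrow> connected_graph E
           \<Longrightarrow> Phi (isoclass E) = 0"
    and E: "is_graph E"
  shows "Fcoeff l Phi n E =
      (if E = {} then Fcoeff l Phi n {} else 0)
    + (if card E = 1 then Fcoeff l Phi n {{0, 1}} else 0)
    + (if card E = 2 then Fcoeff l Phi n {{0, 1}, {2, 3}} else 0)
    + Frem_coeff l Phi n E"
proof -
  note vanish = Fcoeff_eq_0_if_connected[where Phi = Phi, OF Phi_connected E]
  have "card E = 0 \<or> card E = 1 \<or> card E = 2 \<or> 3 \<le> card E"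
    by linarith
  then consider "E = {}" | "card E = 1" | "card E = 2" | "3 \<le> card E"
    using E unfolding is_graph_def by auto
  then show ?thesis
  proof cases
    case 1
    then show ?thesis
      by (simp add: Frem_coeff_def vert_def)
  next
    case 2
    then show ?thesis
      using Fcoeff_graph_iso[OF graph_iso_single_edge_if_card_1[OF E]] card_vert_eq_2_iff[OF E]
      by (auto simp: Frem_coeff_def)
  next
    case 3
    then consider "card (vert E) = 3" | "card (vert E) = 4"
      using card_vert_if_card_eq_2[OF E] by blast
    then show ?thesis
    proof cases
      case 1
      then show ?thesis
        using 3 vanish by (auto simp: Frem_coeff_def)
    next
      case 2
      then show ?thesis
        using 3 Fcoeff_graph_iso[OF graph_iso_two_disjoint_edges_if_card_vert_4[OF E]]
        by (auto simp: Frem_coeff_def)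
    qed
  next
    case 4
    then have "E \<noteq> {}" "card (vert E) \<noteq> 2"
      using card_vert_eq_2_iff[OF E] by auto
    then have "3 \<le> card (vert E)"
      using card_vert_ge_2[OF E] by simp
    then show ?thesis
      using 4 vanish \<open>E \<noteq> {}\<close> by (cases "card (vert E) \<le> 4") (simp_all add: Frem_coeff_def)
  qed
qed

lemma square_sum_eq:
  fixes f :: "'a \<Rightarrow> 'b :: comm_ring_1"
  assumes "finite K"
  shows "(\<Sum>e\<in>K. f e)\<^sup>2 = (\<Sum>e\<in>K. (f e)\<^sup>2) + 2 * (\<Sum>E\<in>{E \<in> Pow K. card E = 2}. prod f E)"
  using assms
proof (induction K rule: finite_induct)
  case empty
  have no_pairs: "{E \<in> Pow {}. card E = 2} = ({} :: 'a set set)"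
    by auto
  show ?case
    by (subst no_pairs) simp
next
  case (insert x K)
  define P where "P = {E \<in> Pow K. card E = 2}"
  have pairs: "{E \<in> Pow (insert x K). card E = 2} = P \<union> (\<lambda>y. {x, y}) ` K"
  proof (rule set_eqI)
    fix E
    show "E \<in> {E \<in> Pow (insert x K). card E = 2} \<longleftrightarrow> E \<in> P \<union> (\<lambda>y. {x, y}) ` K"
    proof (cases "x \<in> E")
      case True
      then show ?thesis
        using insert(2) unfolding P_def by (auto simp: card_2_iff doubleton_eq_iff)
    next
      case False
      then show ?thesis
        using insert(2) unfolding P_def by auto
    qed
  qed
  have "P \<inter> (\<lambda>y. {x, y}) ` K = {}"
    using insert(2) unfolding P_def by auto
  moreover have "inj_on (\<lambda>y. {x, y}) K"
    using insert(2) by (auto simp: inj_on_def doubleton_eq_iff)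
  moreover have "prod f {x, y} = f x * f y" if "y \<in> K" for y
    using that insert(2) by (subgoal_tac "x \<noteq> y") auto
  ultimately have "(\<Sum>E\<in>{E \<in> Pow (insert x K). card E = 2}. prod f E)
      = (\<Sum>E\<in>P. prod f E) + f x * (\<Sum>y\<in>K. f y)"
    unfolding pairs using insert(1)
    by (simp add: sum.union_disjoint P_def sum.reindex sum_distrib_left)
  then show ?case
    using insert(1,2) insert(3)[folded P_def] by (simp add: power2_eq_square algebra_simps)
qed

lemma sum_chi_set_pairs:
  fixes G :: "nat set set"
  assumes p: "0 < p" "p < 1" and K: "finite K"
  defines "L \<equiv> \<Sum>e\<in>K. chi p G e"
  shows "(\<Sum>E\<in>{E \<in> Pow K. card E = 2}. chi_set p G E)
    = (L\<^sup>2 - real (card K) - (1 - 2 * p) / sqrt (p * (1 - p)) * L) / 2"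
proof -
  define b where "b = (1 - 2 * p) / sqrt (p * (1 - p))"
  have "L\<^sup>2 = real (card K) + b * L + 2 * (\<Sum>E\<in>{E \<in> Pow K. card E = 2}. chi_set p G E)"
    using square_sum_eq[OF K, of "chi p G"] unfolding L_def chi_set_def chi_square[OF p] b_def[symmetric]
    by (simp add: sum.distrib sum_distrib_left[symmetric])
  then show ?thesis
    unfolding b_def by simp
qed

lemma sum_Pow_if_card:
  fixes f :: "'a set \<Rightarrow> real"
  assumes "finite K"
  shows "(\<Sum>E\<in>Pow K. (if card E = j then c else 0) * f E) = c * (\<Sum>E\<in>{E \<in> Pow K. card E = j}. f E)"
  unfolding sum.inter_filter[OF finite_Pow_iff[THEN iffD2, OF assms]] sum_distrib_left
  by (rule sum.cong) auto

text \<open>With \<open>L\<close> the normalised edge count, the sum of \<open>chi_set\<close> over the two-edge sets is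
  \<open>(L\<^sup>2 - N - \<beta> L) / 2\<close> (lemma \<open>sum_chi_set_pairs\<close>); the last term of \<open>Fmain\<close> therefore
  gives every two-edge set the coefficient of \<open>K\<^sub>2 + K\<^sub>2\<close>.\<close>

definition Fmain :: "nat \<Rightarrow> (nat set set set \<Rightarrow> real) \<Rightarrow> real \<Rightarrow> nat \<Rightarrow> nat \<Rightarrow> real" where
  "Fmain l Phi p n k =
     (let N = real (card (Kedges n)); L = (real k - p * N) / sqrt (p * (1 - p)) in
      Fcoeff l Phi n {} + Fcoeff l Phi n {{0, 1}} * L
      + Fcoeff l Phi n {{0, 1}, {2, 3}} * (L\<^sup>2 - N - (1 - 2 * p) / sqrt (p * (1 - p)) * L) / 2)"

definition Frem :: "nat \<Rightarrow> (nat set set set \<Rightarrow> real) \<Rightarrow> real \<Rightarrow> nat \<Rightarrow> nat set set \<Rightarrow> real" where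
  "Frem l Phi p n G = (\<Sum>E\<in>Pow (Kedges n). Frem_coeff l Phi n E * chi_set p G E)"

lemma Fpoly_eq_Fmain_Frem:
  assumes p: "0 < p" "p < 1" and "4 \<le> l"
    and Phi_connected: "\<And>E. is_graph E \<Longrightarrow> card (vert E) \<in> {3, 4} \<Longrightarrow> connected_graph E
           \<Longrightarrow> Phi (isoclass E) = 0"
    and G: "G \<subseteq> Kedges n"
  shows "Fpoly l Phi p n G = Fmain l Phi p n (card G) + Frem l Phi p n G"
proof -
  define K where "K = Kedges n"
  have K: "finite K"
    unfolding K_def by (rule finite_Kedges)
  have "Fpoly l Phi p n G = (\<Sum>E\<in>Pow K.
        (if E = {} then Fcoeff l Phi n {} else 0) * chi_set p G E
      + (if card E = 1 then Fcoeff l Phi n {{0, 1}} else 0) * chi_set p G E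
      + (if card E = 2 then Fcoeff l Phi n {{0, 1}, {2, 3}} else 0) * chi_set p G E
      + Frem_coeff l Phi n E * chi_set p G E)"
    unfolding Fpoly_eq_sum_Fcoeff K_def
    by (intro sum.cong refl, subst Fcoeff_split[where Phi = Phi, OF \<open>4 \<le> l\<close> Phi_connected])
      (auto intro: is_graph_if_subset_Kedges simp: distrib_right)
  also have "\<dots> = Fcoeff l Phi n {}
      + Fcoeff l Phi n {{0, 1}} * (\<Sum>E\<in>{E \<in> Pow K. card E = 1}. chi_set p G E)
      + Fcoeff l Phi n {{0, 1}, {2, 3}} * (\<Sum>E\<in>{E \<in> Pow K. card E = 2}. chi_set p G E)
      + Frem l Phi p n G"
  proof -
    have "(\<Sum>E\<in>Pow K. (if E = {} then c else 0) * chi_set p G E) = c" for c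
      using K by (subst sum.remove[of _ "{}"]) (auto simp: chi_set_def)
    then show ?thesis
      unfolding Frem_def K_def[symmetric] sum.distrib sum_Pow_if_card[OF K] by simp
  qed
  also have "\<dots> = Fmain l Phi p n (card G) + Frem l Phi p n G"
    unfolding sum_chi_set_pairs[OF p K] unfolding chi_set_def sum_prod_singletons[OF K]
    unfolding sum_chi_eq[OF K G[folded K_def]] unfolding Fmain_def Let_def K_def by simp
  finally show ?thesis .
qed

section \<open>Second moment of the remainder\<close>

definition Phi_mass :: "nat \<Rightarrow> (nat set set set \<Rightarrow> real) \<Rightarrow> real" where
  "Phi_mass l Phi = (\<Sum>C\<in>graph_classes l. \<bar>Phi C\<bar>)"

lemma choose_le_power: "n choose k \<le> n ^ k"
proof -
  have "n choose k \<le> (n choose k) * fact k"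
    using fact_ge_1[of k] by simp
  also have "\<dots> \<le> n ^ k"
    by (rule binomial_fact_pow)
  finally show ?thesis .
qed

lemma Fcoeff_square_le:
  assumes "is_graph E"
  shows "(Fcoeff l Phi n E)\<^sup>2 \<le> (Phi_mass l Phi)\<^sup>2 * real n ^ (2 * (l - card (vert E)))"
proof (cases "card (vert E) \<le> l")
  case True
  define v where "v = card (vert E)"
  have "isoclass E \<in> graph_classes l"
    using assms True unfolding graph_classes_def by blast
  then have "\<bar>Phi (isoclass E)\<bar> \<le> Phi_mass l Phi"
    unfolding Phi_mass_def by (rule member_le_sum) (auto simp: finite_graph_classes)
  moreover have "(n - v) choose (l - v) \<le> n ^ (l - v)"
    using choose_le_power[of "n - v" "l - v"] power_mono[of "n - v" n "l - v"] by simp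
  then have "real ((n - v) choose (l - v)) \<le> real n ^ (l - v)"
    using of_nat_le_iff[THEN iffD2] by fastforce
  ultimately have "\<bar>Fcoeff l Phi n E\<bar> \<le> real n ^ (l - v) * Phi_mass l Phi"
    unfolding Fcoeff_def v_def[symmetric] using True v_def by (simp add: abs_mult mult_mono)
  then have "\<bar>Fcoeff l Phi n E\<bar>\<^sup>2 \<le> (real n ^ (l - v) * Phi_mass l Phi)\<^sup>2"
    by (intro power_mono) auto
  then show ?thesis
    unfolding v_def by (simp add: power_mult_distrib power_mult[symmetric] mult.commute)
qed (simp add: Fcoeff_def)

lemma Frem_coeff_square_le:
  assumes "is_graph E" "4 \<le> l" "1 \<le> n"
  shows "real n ^ card (vert E) * (Frem_coeff l Phi n E)\<^sup>2 \<le> (Phi_mass l Phi)\<^sup>2 * real n ^ (2 * l - 5)"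
proof -
  define v where "v = card (vert E)"
  define M where "M = (Phi_mass l Phi)\<^sup>2"
  have n: "real n \<ge> 1"
    using assms(3) by simp
  have "0 \<le> M"
    unfolding M_def by simp
  have "Fcoeff l Phi n E = 0" if "l < v"
    using that unfolding Fcoeff_def v_def by simp
  then have "(card E = 2 \<and> v = 3) \<or> (5 \<le> v \<and> v \<le> l) \<or> Frem_coeff l Phi n E = 0"
    unfolding Frem_coeff_def v_def by (auto simp: not_le[symmetric])
  then consider "card E = 2" "v = 3" | "5 \<le> v" "v \<le> l" | "Frem_coeff l Phi n E = 0"
    by blast
  then show ?thesis
  proof cases
    case 1
    have "is_graph {{0::nat, 1}, {2, 3}}" "card (vert {{0::nat, 1}, {2, 3}}) = 4"
      unfolding is_graph_def vert_def by auto
    then have "(Fcoeff l Phi n {{0, 1}, {2, 3}})\<^sup>2 \<le> M * real n ^ (2 * (l - 4))"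
      unfolding M_def using Fcoeff_square_le[of "{{0, 1}, {2, 3}}" l Phi n] by simp
    then have "real n ^ 3 * (Frem_coeff l Phi n E)\<^sup>2 \<le> real n ^ 3 * (M * real n ^ (2 * (l - 4)))"
      using 1 unfolding Frem_coeff_def v_def by (simp add: mult_left_mono)
    also have "\<dots> = M * real n ^ (2 * l - 5)"
      using assms(2) by (simp add: power_add[symmetric] algebra_simps)
    finally show ?thesis
      using 1 unfolding M_def v_def by simp
  next
    case 2
    have "Frem_coeff l Phi n E = Fcoeff l Phi n E"
      using 2 card_vert_if_card_eq_2[OF assms(1)] unfolding Frem_coeff_def v_def by auto
    then have "real n ^ v * (Frem_coeff l Phi n E)\<^sup>2 \<le> real n ^ v * (M * real n ^ (2 * (l - v)))"
      using Fcoeff_square_le[OF assms(1)] unfolding M_def v_def by (simp add: mult_left_mono)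
    also have "\<dots> = M * real n ^ (2 * l - v)"
      using 2 by (simp add: power_add[symmetric] algebra_simps)
    also have "\<dots> \<le> M * real n ^ (2 * l - 5)"
      using 2 n \<open>0 \<le> M\<close> by (intro mult_left_mono power_increasing) auto
    finally show ?thesis
      unfolding M_def v_def .
  qed (simp add: M_def)
qed

lemma card_edge_sets_with_vertices_le:
  "card {E \<in> Pow (Kedges n). card (vert E) = v} \<le> n ^ v * 2 ^ 2 ^ v"
proof -
  define I where "I = {S. S \<subseteq> {0..<n} \<and> card S = v}"
  have fin: "finite I"
    unfolding I_def by (rule finite_subset[of _ "Pow {0..<n}"]) auto
  have "{E \<in> Pow (Kedges n). card (vert E) = v} \<subseteq> (\<Union>S\<in>I. Pow (Pow S))"
  proof
    fix E assume "E \<in> {E \<in> Pow (Kedges n). card (vert E) = v}"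
    then have "vert E \<in> I"
      unfolding I_def using vert_subset_if_subset_Kedges by auto
    moreover have "E \<in> Pow (Pow (vert E))"
      using edge_subset_vert[of _ E] by blast
    ultimately show "E \<in> (\<Union>S\<in>I. Pow (Pow S))"
      by blast
  qed
  then have "card {E \<in> Pow (Kedges n). card (vert E) = v} \<le> card (\<Union>S\<in>I. Pow (Pow S))"
    using fin unfolding I_def by (intro card_mono) (auto intro: finite_subset)
  also have "\<dots> \<le> (\<Sum>S\<in>I. card (Pow (Pow S)))"
    by (rule card_UN_le[OF fin])
  also have "\<dots> = (\<Sum>S\<in>I. 2 ^ 2 ^ v)"
    unfolding I_def by (intro sum.cong refl) (auto simp: card_Pow finite_subset)
  also have "\<dots> = (n choose v) * 2 ^ 2 ^ v"
    unfolding I_def using n_subsets[of "{0..<n}" v] by simp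
  also have "\<dots> \<le> n ^ v * 2 ^ 2 ^ v"
    using choose_le_power by simp
  finally show ?thesis .
qed

lemma sum_Frem_coeff_square_le:
  assumes "4 \<le> l" "1 \<le> n" "v \<le> l"
  shows "(\<Sum>E\<in>{E \<in> Pow (Kedges n). card (vert E) = v}. (Frem_coeff l Phi n E)\<^sup>2)
    \<le> 2 ^ 2 ^ l * (Phi_mass l Phi)\<^sup>2 * real n ^ (2 * l - 5)"
proof -
  define B where "B = (Phi_mass l Phi)\<^sup>2 * real n ^ (2 * l - 5)"
  have n_pos: "0 < real n ^ v"
    using assms(2) by simp
  have "(Frem_coeff l Phi n E)\<^sup>2 \<le> B / real n ^ v" if "E \<in> {E \<in> Pow (Kedges n). card (vert E) = v}" for E
    using Frem_coeff_square_le[OF _ assms(1,2), of E Phi] that n_pos is_graph_if_subset_Kedges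
    unfolding B_def by (auto simp: field_simps)
  then have "(\<Sum>E\<in>{E \<in> Pow (Kedges n). card (vert E) = v}. (Frem_coeff l Phi n E)\<^sup>2)
      \<le> real (card {E \<in> Pow (Kedges n). card (vert E) = v}) * (B / real n ^ v)"
    by (rule sum_bounded_above)
  also have "\<dots> \<le> (real n ^ v * 2 ^ 2 ^ v) * (B / real n ^ v)"
  proof (rule mult_right_mono)
    show "real (card {E \<in> Pow (Kedges n). card (vert E) = v}) \<le> real n ^ v * 2 ^ 2 ^ v"
      using of_nat_mono[OF card_edge_sets_with_vertices_le[of n v]] by simp
  qed (simp add: B_def)
  also have "\<dots> \<le> 2 ^ 2 ^ l * B"
    using n_pos assms(3) unfolding B_def by (simp add: mult_right_mono)
  finally show ?thesis
    unfolding B_def by (simp add: mult.assoc)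
qed

lemma expect_Frem_square_le:
  assumes p: "0 < p" "p < 1" and "4 \<le> l" "1 \<le> n"
  shows "expect p (Kedges n) (\<lambda>G. (Frem l Phi p n G)\<^sup>2)
    \<le> real (l + 1) * 2 ^ 2 ^ l * (Phi_mass l Phi)\<^sup>2 * real n ^ (2 * l - 5)"
proof -
  define K where "K = Kedges n"
  define r where "r E = (Frem_coeff l Phi n E)\<^sup>2" for E
  have fin: "finite (Pow K)"
    unfolding K_def by (simp add: finite_Kedges)
  have "expect p K (\<lambda>G. (Frem l Phi p n G)\<^sup>2) = (\<Sum>E\<in>Pow K. r E)"
    unfolding Frem_def r_def K_def by (rule expect_square_sum_chi_set[OF p finite_Kedges]) simp
  also have "\<dots> = (\<Sum>E\<in>{E \<in> Pow K. card (vert E) \<le> l}. r E)"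
    using fin \<open>4 \<le> l\<close> by (intro sum.mono_neutral_right) (auto simp: r_def Frem_coeff_def Fcoeff_def)
  also have "\<dots> = (\<Sum>v\<in>{..l}. \<Sum>E\<in>{E \<in> {E \<in> Pow K. card (vert E) \<le> l}. card (vert E) = v}. r E)"
    using fin by (intro sum.group[symmetric]) auto
  also have "\<dots> = (\<Sum>v\<in>{..l}. \<Sum>E\<in>{E \<in> Pow K. card (vert E) = v}. r E)"
    by (intro sum.cong refl arg_cong2[where f = sum]) auto
  also have "\<dots> \<le> (\<Sum>v\<in>{..l}. 2 ^ 2 ^ l * (Phi_mass l Phi)\<^sup>2 * real n ^ (2 * l - 5))"
    unfolding r_def K_def using sum_Frem_coeff_square_le[OF assms(3,4)] by (intro sum_mono) auto
  finally show ?thesis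
    unfolding K_def by (simp add: algebra_simps)
qed

section \<open>Anticoncentration\<close>

lemma weighted_markov:
  fixes w f :: "'a \<Rightarrow> real"
  assumes "finite A" "\<And>x. x \<in> A \<Longrightarrow> 0 \<le> w x" "\<And>x. x \<in> A \<Longrightarrow> 0 \<le> f x" "0 < c"
  shows "sum w {x \<in> A. c < f x} \<le> (\<Sum>x\<in>A. w x * f x) / c"
proof -
  have "sum w {x \<in> A. c < f x} \<le> (\<Sum>x\<in>{x \<in> A. c < f x}. w x * f x / c)"
    using assms(2,4) by (intro sum_mono) (auto simp: field_simps intro: mult_right_mono)
  also have "\<dots> \<le> (\<Sum>x\<in>A. w x * f x / c)"
    using assms by (intro sum_mono2) auto
  finally show ?thesis
    by (simp add: sum_divide_distrib)
qed

lemma exists_fiber_ge: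
  fixes w :: "'a \<Rightarrow> real"
  assumes "finite A" "finite Y" "F ` A \<subseteq> Y" "0 < a" "a \<le> sum w A" "real (card Y) \<le> b"
  shows "\<exists>y. a / b \<le> sum w {x \<in> A. F x = y}"
proof (rule ccontr)
  assume "\<not> ?thesis"
  then have small: "sum w {x \<in> A. F x = y} < a / b" for y
    by (meson not_le)
  have fibers: "(\<Sum>y\<in>Y. sum w {x \<in> A. F x = y}) = sum w A"
    using sum.group[OF assms(1-3)] by simp
  then have "Y \<noteq> {}"
    using assms(4,5) by auto
  then have "0 < b"
    using assms(2,6) card_gt_0_iff[of Y] by linarith
  have "sum w A < (\<Sum>y\<in>Y. a / b)"
    unfolding fibers[symmetric] using assms(2) \<open>Y \<noteq> {}\<close> small by (intro sum_strict_mono) auto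
  also have "\<dots> \<le> a"
    using assms(4,6) \<open>0 < b\<close> by (simp add: field_simps mult_right_mono)
  finally show False
    using assms(5) by simp
qed

lemma card_Ints_near_le:
  assumes "0 \<le> t"
  shows "finite {y \<in> \<int>. \<bar>y - c\<bar> \<le> t}" and "real (card {y \<in> \<int>. \<bar>y - c\<bar> \<le> t}) \<le> 2 * t + 1"
proof -
  have eq: "{y \<in> \<int>. \<bar>y - c\<bar> \<le> t} = real_of_int ` {\<lceil>c - t\<rceil>..\<lfloor>c + t\<rfloor>}"
    by (auto simp: Ints_def abs_le_iff ceiling_le_iff le_floor_iff)
  then show "finite {y \<in> \<int>. \<bar>y - c\<bar> \<le> t}"
    by simp
  have "card {y \<in> \<int>. \<bar>y - c\<bar> \<le> t} \<le> nat (\<lfloor>c + t\<rfloor> - \<lceil>c - t\<rceil> + 1)"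
    unfolding eq using card_image_le[of "{\<lceil>c - t\<rceil>..\<lfloor>c + t\<rfloor>}" real_of_int] by simp
  moreover have "real_of_int (\<lfloor>c + t\<rfloor> - \<lceil>c - t\<rceil> + 1) \<le> 2 * t + 1"
    using of_int_floor_le[of "c + t"] le_of_int_ceiling[of "c - t"] by linarith
  ultimately show "real (card {y \<in> \<int>. \<bar>y - c\<bar> \<le> t}) \<le> 2 * t + 1"
    using assms by linarith
qed

lemma card_UN_Ints_near_le:
  assumes "finite Ks" "0 \<le> t"
  shows "finite (\<Union>k\<in>Ks. {y \<in> \<int>. \<bar>y - g k\<bar> \<le> t})"
    and "real (card (\<Union>k\<in>Ks. {y \<in> \<int>. \<bar>y - g k\<bar> \<le> t})) \<le> real (card Ks) * (2 * t + 1)"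
proof -
  show "finite (\<Union>k\<in>Ks. {y \<in> \<int>. \<bar>y - g k\<bar> \<le> t})"
    using assms card_Ints_near_le(1) by blast
  have "real (card (\<Union>k\<in>Ks. {y \<in> \<int>. \<bar>y - g k\<bar> \<le> t}))
      \<le> (\<Sum>k\<in>Ks. real (card {y \<in> \<int>. \<bar>y - g k\<bar> \<le> t}))"
    using of_nat_mono[OF card_UN_le[OF assms(1)]] by simp
  also have "\<dots> \<le> real (card Ks) * (2 * t + 1)"
    using sum_bounded_above[of Ks _ "2 * t + 1"] card_Ints_near_le(2)[OF assms(2)] by simp
  finally show "real (card (\<Union>k\<in>Ks. {y \<in> \<int>. \<bar>y - g k\<bar> \<le> t})) \<le> real (card Ks) * (2 * t + 1)" .
qed

lemma mass_window_small_error_ge: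
  fixes w D :: "'a \<Rightarrow> real" and X :: "'a \<Rightarrow> 'k"
  assumes fin: "finite A" and w: "\<And>x. x \<in> A \<Longrightarrow> 0 \<le> w x"
    and var: "(\<Sum>x\<in>A. w x * (D x)\<^sup>2) \<le> B" and "0 < B"
    and window: "3 / 4 \<le> sum w {x \<in> A. X x \<in> Ks}"
  shows "5 / 8 \<le> sum w {x \<in> A. X x \<in> Ks \<and> (D x)\<^sup>2 \<le> 8 * B}"
proof -
  define bad where "bad = {x \<in> A. 8 * B < (D x)\<^sup>2}"
  have "sum w bad \<le> (\<Sum>x\<in>A. w x * (D x)\<^sup>2) / (8 * B)"
    unfolding bad_def using \<open>0 < B\<close> by (intro weighted_markov[OF fin w]) auto
  also have "\<dots> \<le> B / (8 * B)"
    using var \<open>0 < B\<close> by (intro divide_right_mono) auto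
  finally have "sum w bad \<le> 1 / 8"
    using \<open>0 < B\<close> by simp
  have "{x \<in> A. X x \<in> Ks} \<subseteq> {x \<in> A. X x \<in> Ks \<and> (D x)\<^sup>2 \<le> 8 * B} \<union> bad"
    unfolding bad_def by auto
  then have "sum w {x \<in> A. X x \<in> Ks} \<le> sum w ({x \<in> A. X x \<in> Ks \<and> (D x)\<^sup>2 \<le> 8 * B} \<union> bad)"
    using fin w by (intro sum_mono2) (auto simp: bad_def)
  also have "\<dots> = sum w {x \<in> A. X x \<in> Ks \<and> (D x)\<^sup>2 \<le> 8 * B} + sum w bad"
    using fin by (intro sum.union_disjoint) (auto simp: bad_def)
  finally show ?thesis
    using window \<open>sum w bad \<le> 1 / 8\<close> by simp
qed

lemma anticoncentration:
  fixes w D F :: "'a \<Rightarrow> real" and X :: "'a \<Rightarrow> 'k" and g :: "'k \<Rightarrow> real"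
  assumes fin: "finite A" and w: "\<And>x. x \<in> A \<Longrightarrow> 0 \<le> w x"
    and F_Ints: "\<And>x. x \<in> A \<Longrightarrow> F x \<in> \<int>"
    and F_eq: "\<And>x. x \<in> A \<Longrightarrow> F x = g (X x) + D x"
    and var: "(\<Sum>x\<in>A. w x * (D x)\<^sup>2) \<le> B" and "0 < B"
    and Ks: "finite Ks" "real (card Ks) \<le> m" and window: "3 / 4 \<le> sum w {x \<in> A. X x \<in> Ks}"
  shows "\<exists>y. 5 / (8 * m * (2 * sqrt (8 * B) + 1)) \<le> sum w {x \<in> A. F x = y}"
proof -
  define t where "t = sqrt (8 * B)"
  define good where "good = {x \<in> A. X x \<in> Ks \<and> (D x)\<^sup>2 \<le> 8 * B}"
  define Y where "Y = (\<Union>k\<in>Ks. {y \<in> \<int>. \<bar>y - g k\<bar> \<le> t})"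
  have "0 \<le> t"
    unfolding t_def using \<open>0 < B\<close> by simp
  have F_good: "F ` good \<subseteq> Y"
  proof
    fix y assume "y \<in> F ` good"
    then obtain x where x: "x \<in> good" "y = F x"
      by blast
    then have "\<bar>D x\<bar> \<le> t"
      unfolding good_def t_def using real_sqrt_le_mono[of "(D x)\<^sup>2" "8 * B"] by simp
    moreover have "x \<in> A" "X x \<in> Ks"
      using x(1) unfolding good_def by auto
    ultimately show "y \<in> Y"
      using x(2) F_Ints F_eq unfolding Y_def by (intro UN_I[of "X x"]) auto
  qed
  have "real (card Y) \<le> real (card Ks) * (2 * t + 1)"
    unfolding Y_def by (rule card_UN_Ints_near_le(2)[OF Ks(1) \<open>0 \<le> t\<close>])
  also have "\<dots> \<le> m * (2 * t + 1)"
    using Ks(2) \<open>0 \<le> t\<close> by (intro mult_right_mono) auto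
  finally have "real (card Y) \<le> m * (2 * t + 1)" .
  moreover have "5 / 8 \<le> sum w good"
    unfolding good_def by (rule mass_window_small_error_ge[OF fin w var \<open>0 < B\<close> window])
  moreover have "finite good" "finite Y"
    using fin card_UN_Ints_near_le(1)[OF Ks(1) \<open>0 \<le> t\<close>] unfolding good_def Y_def by auto
  ultimately obtain y where "5 / 8 / (m * (2 * t + 1)) \<le> sum w {x \<in> good. F x = y}"
    using exists_fiber_ge[OF _ _ F_good, where a = "5 / 8" and b = "m * (2 * t + 1)" and w = w] by auto
  also have "\<dots> \<le> sum w {x \<in> A. F x = y}"
    using fin w by (intro sum_mono2) (auto simp: good_def)
  finally show ?thesis
    unfolding t_def by (auto simp: mult.assoc)
qed

definition count_window :: "real \<Rightarrow> nat \<Rightarrow> nat set" where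
  "count_window p N = {k. \<bar>real k - p * real N\<bar> \<le> 2 * sqrt (p * (1 - p)) * sqrt (real N)}"

lemma count_window_card_le:
  assumes "0 \<le> p" "p \<le> 1"
  shows "finite (count_window p N)" and "real (card (count_window p N)) \<le> 2 * sqrt (real N) + 1"
proof -
  define R where "R = 2 * sqrt (p * (1 - p)) * sqrt (real N)"
  have "0 \<le> R"
    unfolding R_def using assms by simp
  have "4 * (p * (1 - p)) = 1 - (2 * p - 1)\<^sup>2"
    by (simp add: power2_eq_square algebra_simps)
  then have "4 * (p * (1 - p)) \<le> 1"
    by simp
  then have "2 * sqrt (p * (1 - p)) \<le> 1"
    using real_sqrt_le_mono[of "4 * (p * (1 - p))" 1] by (simp add: real_sqrt_mult)
  then have "R \<le> sqrt (real N)"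
    unfolding R_def using mult_right_mono[of _ 1 "sqrt (real N)"] by simp
  have sub: "real ` count_window p N \<subseteq> {y \<in> \<int>. \<bar>y - p * real N\<bar> \<le> R}"
    unfolding count_window_def R_def by auto
  then show "finite (count_window p N)"
    using card_Ints_near_le(1)[OF \<open>0 \<le> R\<close>] finite_imageD finite_subset inj_on_of_nat by metis
  then have "card (count_window p N) \<le> card {y \<in> \<int>. \<bar>y - p * real N\<bar> \<le> R}"
    using card_mono[OF card_Ints_near_le(1)[OF \<open>0 \<le> R\<close>] sub] by (simp add: card_image)
  then show "real (card (count_window p N)) \<le> 2 * sqrt (real N) + 1"
    using card_Ints_near_le(2)[OF \<open>0 \<le> R\<close>, of "p * real N"] \<open>R \<le> sqrt (real N)\<close> by linarith
qed

lemma count_window_mass: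
  assumes p: "0 < p" "p < 1" and K: "finite K" "K \<noteq> {}"
  shows "3 / 4 \<le> sum (bern_weight p K) {G \<in> Pow K. card G \<in> count_window p (card K)}"
proof -
  define N where "N = real (card K)"
  define L where "L G = (\<Sum>e\<in>K. chi p G e)" for G
  define close where "close = {G \<in> Pow K. (L G)\<^sup>2 \<le> 4 * N}"
  have "0 < N"
    unfolding N_def using K by (simp add: card_gt_0_iff)
  have w: "0 \<le> bern_weight p K G" for G
    using p by (simp add: bern_weight_nonneg)
  have "sum (bern_weight p K) {G \<in> Pow K. 4 * N < (L G)\<^sup>2}
      \<le> (\<Sum>G\<in>Pow K. bern_weight p K G * (L G)\<^sup>2) / (4 * N)"
    by (rule weighted_markov) (use K(1) w \<open>0 < N\<close> in auto)
  also have "\<dots> = N / (4 * N)"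
    using expect_square_sum_chi[OF p K(1)] unfolding expect_def L_def N_def by simp
  finally have "sum (bern_weight p K) {G \<in> Pow K. 4 * N < (L G)\<^sup>2} \<le> 1 / 4"
    using \<open>0 < N\<close> by simp
  moreover have "sum (bern_weight p K) (Pow K) = sum (bern_weight p K) close
      + sum (bern_weight p K) {G \<in> Pow K. 4 * N < (L G)\<^sup>2}"
  proof -
    have "Pow K \<inter> {G. (L G)\<^sup>2 \<le> 4 * N} = close" "Pow K - {G. (L G)\<^sup>2 \<le> 4 * N} = {G \<in> Pow K. 4 * N < (L G)\<^sup>2}"
      unfolding close_def by auto
    then show ?thesis
      using sum.Int_Diff[of "Pow K" "bern_weight p K" "{G. (L G)\<^sup>2 \<le> 4 * N}"] K(1) by simp
  qed
  moreover have "sum (bern_weight p K) (Pow K) = 1"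
    using expect_one[OF K(1), of p] unfolding expect_def by simp
  moreover have "close \<subseteq> {G \<in> Pow K. card G \<in> count_window p (card K)}"
  proof safe
    fix G assume G: "G \<in> close"
    then have "\<bar>L G\<bar> \<le> 2 * sqrt N"
      using real_sqrt_le_mono[of "(L G)\<^sup>2" "4 * N"] unfolding close_def by (simp add: real_sqrt_mult)
    moreover have "real (card G) - p * N = sqrt (p * (1 - p)) * L G"
      using sum_chi_eq[OF K(1)] G p unfolding L_def N_def close_def by simp
    ultimately show "card G \<in> count_window p (card K)"
      unfolding count_window_def N_def[symmetric] using p by (simp add: abs_mult mult_left_mono mult.assoc)
  qed (auto simp: close_def)
  then have "sum (bern_weight p K) close \<le> sum (bern_weight p K) {G \<in> Pow K. card G \<in> count_window p (card K)}"
    using K(1) w by (intro sum_mono2) auto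
  ultimately show ?thesis
    by simp
qed

lemma rate_le:
  assumes n: "2 \<le> n" and l: "4 \<le> l" and "0 < C"
  shows "5 / (24 * (2 * sqrt (8 * C) + 1)) * real n powr (3 / 2 - real l)
    \<le> 5 / (8 * (3 * real n) * (2 * sqrt (8 * (C * real n ^ (2 * l - 5))) + 1))"
proof -
  define q where "q = real n powr (real l - 5 / 2)"
  define s where "s = sqrt (8 * C)"
  have "1 \<le> q" "0 \<le> s"
    unfolding q_def s_def using n l \<open>0 < C\<close> by (auto intro: ge_one_powr_ge_zero)
  have "real n ^ (2 * l - 5) = q\<^sup>2"
    unfolding q_def using n l
    by (simp add: powr_realpow[symmetric] of_nat_diff powr_powr[symmetric] power2_eq_square
        powr_add[symmetric])
  then have sqrt_eq: "sqrt (8 * (C * real n ^ (2 * l - 5))) = s * q"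
    unfolding s_def using \<open>1 \<le> q\<close> by (simp add: real_sqrt_mult)
  have "real n * q = real n powr (real l - 3 / 2)"
    unfolding q_def using powr_add[of "real n" 1 "real l - 5 / 2"] n by simp
  then have powr_eq: "real n powr (3 / 2 - real l) = 1 / (real n * q)"
    using powr_minus_divide[of "real n" "real l - 3 / 2"] by simp
  have "real n * (2 * (s * q) + 1) \<le> real n * ((2 * s + 1) * q)"
    using \<open>1 \<le> q\<close> by (intro mult_left_mono) (auto simp: algebra_simps)
  then have "5 / (24 * (real n * ((2 * s + 1) * q))) \<le> 5 / (24 * (real n * (2 * (s * q) + 1)))"
    using n \<open>0 \<le> s\<close> \<open>1 \<le> q\<close> by (intro divide_left_mono mult_pos_pos) (auto intro: add_nonneg_pos)
  then show ?thesis
    unfolding powr_eq sqrt_eq s_def[symmetric] by (simp add: mult_ac)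
qed

lemma prob_Fpoly_eq_ge:
  fixes p :: real and l n :: nat and Phi :: "nat set set set \<Rightarrow> real"
  assumes p: "0 < p" "p < 1" and l: "4 \<le> l" and n: "2 \<le> n"
    and Phi_connected: "\<And>E. is_graph E \<Longrightarrow> card (vert E) \<in> {3, 4} \<Longrightarrow> connected_graph E
           \<Longrightarrow> Phi (isoclass E) = 0"
    and F_Ints: "\<And>G. G \<subseteq> Kedges n \<Longrightarrow> Fpoly l Phi p n G \<in> \<int>"
  defines "C \<equiv> real (l + 1) * 2 ^ 2 ^ l * (Phi_mass l Phi)\<^sup>2 + 1"
  shows "\<exists>y. 5 / (24 * (2 * sqrt (8 * C) + 1)) * real n powr (3 / 2 - real l)
           \<le> prob_G p n (\<lambda>G. Fpoly l Phi p n G = y)"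
proof -
  define K where "K = Kedges n"
  define B where "B = C * real n ^ (2 * l - 5)"
  have "0 < C"
    unfolding C_def by (simp add: add_nonneg_pos)
  then have "0 < B"
    using n unfolding B_def by simp
  have K: "finite K" "K \<noteq> {}"
    unfolding K_def using finite_Kedges Kedges_nonempty[OF n] by auto
  have "expect p K (\<lambda>G. (Frem l Phi p n G)\<^sup>2)
      \<le> real (l + 1) * 2 ^ 2 ^ l * (Phi_mass l Phi)\<^sup>2 * real n ^ (2 * l - 5)"
    unfolding K_def using n by (intro expect_Frem_square_le[OF p l]) simp
  also have "\<dots> \<le> B"
    unfolding B_def C_def by (simp add: distrib_right)
  finally have "expect p K (\<lambda>G. (Frem l Phi p n G)\<^sup>2) \<le> B" .
  moreover have "sqrt (real (card K)) \<le> real n"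
    using card_Kedges_le[of n] unfolding K_def by (simp add: real_le_lsqrt flip: of_nat_power)
  then have "real (card (count_window p (card K))) \<le> 3 * real n"
    using count_window_card_le(2)[of p "card K"] p n by simp
  ultimately obtain y where "5 / (8 * (3 * real n) * (2 * sqrt (8 * B) + 1))
      \<le> sum (bern_weight p K) {G \<in> Pow K. Fpoly l Phi p n G = y}"
    using anticoncentration[of "Pow K" "bern_weight p K" "Fpoly l Phi p n" "Fmain l Phi p n" card
        "Frem l Phi p n" B "count_window p (card K)" "3 * real n"]
      K \<open>0 < B\<close> p F_Ints Fpoly_eq_Fmain_Frem[where Phi = Phi, OF p l Phi_connected] bern_weight_nonneg
      count_window_card_le(1)[of p] count_window_mass[OF p K]
    unfolding K_def expect_def by fastforce
  then show ?thesis
    using rate_le[OF n l \<open>0 < C\<close>] unfolding prob_G_eq_sum_bern_weight K_def B_def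
    by (meson order_trans)
qed

theorem theorem6p1:
  fixes p :: real and l :: nat and Phi :: "nat set set set \<Rightarrow> real"
  assumes "0 < p" "p < 1" "l \<ge> 1"
    and "\<And>E. is_graph E \<Longrightarrow> card (vert E) \<in> {3, 4} \<Longrightarrow> connected_graph E
           \<Longrightarrow> Phi (isoclass E) = 0"
    and "isoclass {{0, 1}} \<in> graph_classes l" "Phi (isoclass {{0, 1}}) \<noteq> 0"
    and "isoclass {{0, 1}, {2, 3}} \<in> graph_classes l" "Phi (isoclass {{0, 1}, {2, 3}}) \<noteq> 0"
    and "\<And>n G. G \<subseteq> Kedges n \<Longrightarrow> Fpoly l Phi p n G \<in> \<int>"
  shows "\<exists>y :: nat \<Rightarrow> real. \<exists>c > 0. \<exists>N. \<forall>n \<ge> N.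
           prob_G p n (\<lambda>G. Fpoly l Phi p n G = y n) \<ge> c * real n powr (3 / 2 - real l)"
proof -
  define C where "C = real (l + 1) * 2 ^ 2 ^ l * (Phi_mass l Phi)\<^sup>2 + 1"
  define c where "c = 5 / (24 * (2 * sqrt (8 * C) + 1))"
  have "4 \<le> l"
    using card_vert_le_if_isoclass_mem[OF assms(7)] by (simp add: is_graph_def vert_def)
  then have "\<forall>n. \<exists>y. 2 \<le> n \<longrightarrow> c * real n powr (3 / 2 - real l) \<le> prob_G p n (\<lambda>G. Fpoly l Phi p n G = y)"
    using prob_Fpoly_eq_ge[OF assms(1,2) _ _ assms(4,9)] unfolding c_def C_def by blast
  then obtain y where "\<forall>n \<ge> 2. c * real n powr (3 / 2 - real l) \<le> prob_G p n (\<lambda>G. Fpoly l Phi p n G = y n)"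
    by metis
  moreover have "0 < c"
    unfolding c_def C_def by (simp add: add_nonneg_pos)
  ultimately show ?thesis
    by blast
qed

end
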